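(* For every constant $c\in\mathbb C$, the polynomial $z^m+\bar z^m$ is quasiharmonic, i.e. $F(z^m+\bar z^m)=0$. The polynomials $z\bar z$ and $z^m+\bar z^m$ are algebraically independent.
   Context: Let $m\ge2$, $\zeta=e^{2\pi i/m}$, and let $z,\bar z$ be independent variables. For $j=0,\dots,m-1$ let $s_j$ be the algebra automorphism of $\mathbb C[z,\bar z]$ with $s_j(z)=-\zeta^j\bar z$, $s_j(\bar z)=-\zeta^{-j}z$. For constant $c$ define Dunkl operators $Y(q)=\frac{\partial q}{\partial z}-c\sum_j\frac{q-s_j(q)}{z+\zeta^j\bar z}$, $\bar Y(q)=\frac{\partial q}{\partial\bar z}-c\sum_j\frac{q-s_j(q)}{\bar z+\zeta^{-j}z}$, and $F=-Y\bar Y$. *)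

theory Defs
  imports Complex_Main "HOL-Computational_Algebra.Polynomial"
begin

text \<open>Polynomials in the two independent variables z, zbar over the complex numbers are
represented as complex poly poly: a polynomial in z (outer variable) whose coefficients
are polynomials in zbar (inner variable).\<close>

type_synonym bipoly = "complex poly poly"

definition Zv :: bipoly where "Zv = [:0, 1:]"
definition Zbv :: bipoly where "Zbv = [:[:0, 1:]:]"
definition cst2 :: "complex \<Rightarrow> bipoly" where "cst2 a = [:[:a:]:]"

text \<open>Substitution z := A, zbar := B (the algebra homomorphism determined by these values).\<close>
definition subst2 :: "bipoly \<Rightarrow> bipoly \<Rightarrow> bipoly \<Rightarrow> bipoly" where
  "subst2 q A B = poly (map_poly (\<lambda>c. poly (map_poly cst2 c) B) q) A"

definition dz :: "bipoly \<Rightarrow> bipoly" where "dz q = pderiv q"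
definition dzb :: "bipoly \<Rightarrow> bipoly" where "dzb q = map_poly pderiv q"

definition zeta :: "nat \<Rightarrow> complex" where "zeta m = cis (2 * pi / real m)"

definition sref :: "nat \<Rightarrow> nat \<Rightarrow> bipoly \<Rightarrow> bipoly" where
  "sref m j q = subst2 q (- cst2 (zeta m ^ j) * Zbv) (- cst2 (inverse (zeta m ^ j)) * Zv)"

text \<open>Dunkl operators (the quotients are exact polynomial divisions).\<close>
definition DunklY :: "nat \<Rightarrow> complex \<Rightarrow> bipoly \<Rightarrow> bipoly" where
  "DunklY m c q = dz q - cst2 c *
     (\<Sum>j<m. (q - sref m j q) div (Zv + cst2 (zeta m ^ j) * Zbv))"

definition DunklYb :: "nat \<Rightarrow> complex \<Rightarrow> bipoly \<Rightarrow> bipoly" where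
  "DunklYb m c q = dzb q - cst2 c *
     (\<Sum>j<m. (q - sref m j q) div (Zbv + cst2 (inverse (zeta m ^ j)) * Zv))"

definition DunklF :: "nat \<Rightarrow> complex \<Rightarrow> bipoly \<Rightarrow> bipoly" where
  "DunklF m c q = - DunklY m c (DunklYb m c q)"

definition alg_indep2 :: "bipoly \<Rightarrow> bipoly \<Rightarrow> bool" where
  "alg_indep2 p q \<longleftrightarrow> (\<forall>P :: bipoly. subst2 P p q = 0 \<longrightarrow> P = 0)"

end

theory Submission
  imports Defs
begin

text \<open>A bivariate polynomial is determined by its values on \<open>\<complex>\<^sup>2\<close>, so every identity below
is checked pointwise. With \<open>w = \<zeta>\<^sup>j\<close>, the factorisation of \<open>y\<^sup>n - (-w\<^sup>-\<^sup>1 x)\<^sup>n\<close> exhibits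
\<open>zbar\<^sup>n - s\<^sub>j(zbar\<^sup>n)\<close> as a multiple of the linear form \<open>zbar + w\<^sup>-\<^sup>1 z\<close> vanishing on the mirror of \<open>s\<^sub>j\<close>. Summing the
quotients over \<open>j\<close>, the root-of-unity sums \<open>\<Sum>\<^sub>j \<zeta>\<^sup>-\<^sup>j\<^sup>k\<close> (\<open>0 \<le> k < m\<close>) keep only the
term \<open>k = 0\<close>. Hence \<open>Ybar(z\<^sup>m + zbar\<^sup>m)\<close> is a multiple of \<open>zbar\<^sup>m\<^sup>-\<^sup>1\<close>, and \<open>Y\<close> kills
\<open>zbar\<^sup>n\<close> for \<open>n < m\<close>. For the independence, every \<open>(u, v) \<in> \<complex>\<^sup>2\<close> has the form
\<open>(ab, a\<^sup>m + b\<^sup>m)\<close>: take \<open>a\<^sup>m\<close> and \<open>b\<^sup>m\<close> to be the roots of \<open>t\<^sup>2 - v t + u\<^sup>m\<close>.\<close>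

definition eval2 :: "bipoly \<Rightarrow> complex \<Rightarrow> complex \<Rightarrow> complex" where
  "eval2 q x y = poly (poly q [:x:]) y"

lemma poly_map_poly_eval2: "poly (map_poly (\<lambda>c. poly c y) q) x = eval2 q x y"
  unfolding eval2_def by (induction q rule: pCons_induct) (auto simp: map_poly_pCons)

lemma eval2_simps [simp]:
  "eval2 (p + q) x y = eval2 p x y + eval2 q x y"
  "eval2 (p - q) x y = eval2 p x y - eval2 q x y"
  "eval2 (p * q) x y = eval2 p x y * eval2 q x y"
  "eval2 (- p) x y = - eval2 p x y"
  "eval2 (p ^ n) x y = eval2 p x y ^ n"
  "eval2 (sum f A) x y = (\<Sum>a\<in>A. eval2 (f a) x y)"
  "eval2 0 x y = 0" "eval2 1 x y = 1"
  "eval2 Zv x y = x" "eval2 Zbv x y = y" "eval2 (cst2 a) x y = a"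
  by (simp_all add: eval2_def poly_sum Zv_def Zbv_def cst2_def)

lemma bipoly_eqI:
  assumes "\<And>x y. eval2 p x y = eval2 q x y"
  shows "p = q"
proof -
  have "\<And>x y. poly (map_poly (\<lambda>c. poly c y) (p - q)) x = 0"
    using assms by (simp add: poly_map_poly_eval2)
  then have "\<And>y. map_poly (\<lambda>c. poly c y) (p - q) = 0"
    by (simp add: poly_all_0_iff_0 [symmetric])
  then have "\<And>y i. poly (coeff (p - q) i) y = 0"
    by (metis coeff_0 coeff_map_poly poly_0)
  then have "\<And>i. coeff (p - q) i = 0"
    by (simp add: poly_all_0_iff_0 [symmetric])
  then show ?thesis
    by (simp add: poly_eq_iff)
qed

lemma cst2_0 [simp]: "cst2 0 = 0"
  by (simp add: cst2_def)

lemma eval2_subst2 [simp]: "eval2 (subst2 q A B) x y = eval2 q (eval2 A x y) (eval2 B x y)"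
proof -
  have eval2_poly: "eval2 (poly Q A) x y = poly (map_poly (\<lambda>p. eval2 p x y) Q) (eval2 A x y)"
    for Q :: "bipoly poly"
    by (induction Q rule: pCons_induct) (auto simp: map_poly_pCons)
  have eval2_coeff: "eval2 (poly (map_poly cst2 c) B) x y = poly c (eval2 B x y)" for c
    by (induction c rule: pCons_induct) (auto simp: map_poly_pCons)
  have "map_poly (\<lambda>p. eval2 p x y) (map_poly (\<lambda>c. poly (map_poly cst2 c) B) q)
      = map_poly (\<lambda>c. poly c (eval2 B x y)) q"
    by (subst map_poly_map_poly) (simp_all add: o_def eval2_coeff)
  then show ?thesis
    by (simp add: subst2_def eval2_poly poly_map_poly_eval2)
qed

lemma eval2_sref [simp]:
  "eval2 (sref m j q) x y = eval2 q (- (zeta m ^ j) * y) (- inverse (zeta m ^ j) * x)"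
  by (simp add: sref_def)

lemma dz_cst2_Zbv_power: "dz (cst2 a * Zbv ^ n) = 0"
  by (simp add: dz_def cst2_def Zbv_def poly_const_pow pderiv_pCons)

lemma dzb_power_sum: "dzb (Zv ^ m + Zbv ^ m) = cst2 (of_nat m) * Zbv ^ (m - 1)"
proof -
  have "Zv ^ m = monom 1 m"
    by (simp add: Zv_def monom_altdef)
  then have "map_poly pderiv (Zv ^ m) = 0"
    by (simp add: map_poly_monom)
  moreover have "map_poly pderiv (Zbv ^ m) = [:pderiv ([:0, 1:] ^ m):]"
    by (simp add: Zbv_def poly_const_pow map_poly_pCons)
  moreover have "map_poly pderiv (Zv ^ m + Zbv ^ m)
      = map_poly pderiv (Zv ^ m) + map_poly pderiv (Zbv ^ m)"
    by (rule poly_eqI) (simp add: coeff_map_poly pderiv_add)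
  ultimately show ?thesis
    by (simp add: dzb_def pderiv_power pderiv_pCons cst2_def Zbv_def poly_const_pow)
qed

lemma zeta_neq_0 [simp]: "zeta m \<noteq> 0"
  by (simp add: zeta_def)

lemma zeta_power: "zeta m ^ e = cis (2 * pi * real e / real m)"
  by (simp add: zeta_def DeMoivre ac_simps)

lemma zeta_power_self: "0 < m \<Longrightarrow> zeta m ^ m = 1"
  by (simp add: zeta_power)

lemma zeta_power_power_self: "0 < m \<Longrightarrow> (zeta m ^ j) ^ m = 1"
  by (metis mult.commute power_mult power_one zeta_power_self)

lemma zeta_power_eq_1_iff:
  assumes "e < m"
  shows "zeta m ^ e = 1 \<longleftrightarrow> e = 0"
proof
  assume "zeta m ^ e = 1"
  then have "zeta m ^ e = zeta m ^ 0"
    by simp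
  then show "e = 0"
    using inj_onD [OF bij_betw_imp_inj_on [OF bij_betw_roots_unity]] assms
    by (auto simp: zeta_power)
qed simp

lemma sum_inverse_zeta_powers:
  assumes "e < m"
  shows "(\<Sum>j<m. inverse (zeta m ^ j) ^ e) = (if e = 0 then of_nat m else 0)"
proof (cases "e = 0")
  case False
  define r where "r = inverse (zeta m ^ e)"
  have "r ^ m = 1"
    using assms by (simp add: r_def power_inverse zeta_power_power_self)
  moreover have "r \<noteq> 1"
    using assms False by (simp add: r_def zeta_power_eq_1_iff)
  ultimately have "(\<Sum>j<m. r ^ j) = 0"
    by (simp add: geometric_sum)
  then show ?thesis
    using False by (simp add: r_def power_inverse mult.commute flip: power_mult)
qed simp

definition reflection_quotient :: "nat \<Rightarrow> nat \<Rightarrow> nat \<Rightarrow> bipoly" where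
  "reflection_quotient m j n = (\<Sum>i<n. (- cst2 (inverse (zeta m ^ j)) * Zv) ^ (n - Suc i) * Zbv ^ i)"

lemma sum_reflection_quotients:
  fixes x y :: complex
  assumes "e + n \<le> m" and "0 < n"
  shows "(\<Sum>j<m. inverse (zeta m ^ j) ^ e * eval2 (reflection_quotient m j n) x y)
       = (if e = 0 then of_nat m * y ^ (n - 1) else 0)"
proof -
  have summand_eq: "w ^ e * ((- w * x) ^ (n - Suc i) * y ^ i)
      = (- x) ^ (n - Suc i) * y ^ i * w ^ (e + (n - Suc i))"
    for w :: complex and i
  proof -
    have "(- w * x) ^ (n - Suc i) = w ^ (n - Suc i) * (- x) ^ (n - Suc i)"
      by (simp flip: power_mult_distrib)
    then show ?thesis
      by (simp add: power_add mult_ac)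
  qed
  have "(\<Sum>j<m. inverse (zeta m ^ j) ^ e * eval2 (reflection_quotient m j n) x y)
      = (\<Sum>j<m. \<Sum>i<n. (- x) ^ (n - Suc i) * y ^ i * inverse (zeta m ^ j) ^ (e + (n - Suc i)))"
    by (simp only: reflection_quotient_def eval2_simps sum_distrib_left summand_eq)
  also have "\<dots> = (\<Sum>i<n. (- x) ^ (n - Suc i) * y ^ i * (\<Sum>j<m. inverse (zeta m ^ j) ^ (e + (n - Suc i))))"
    by (subst sum.swap) (simp add: sum_distrib_left)
  also have "\<dots> = (\<Sum>i<n. if e = 0 \<and> i = n - 1 then of_nat m * y ^ (n - 1) else 0)"
    using assms by (intro sum.cong refl) (auto simp: sum_inverse_zeta_powers)
  also have "\<dots> = (if e = 0 then of_nat m * y ^ (n - 1) else 0)"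
    using assms by (simp add: sum.delta)
  finally show ?thesis .
qed

lemma Zbv_power_minus_sref:
  "Zbv ^ n - sref m j (Zbv ^ n) = (Zbv + cst2 (inverse (zeta m ^ j)) * Zv) * reflection_quotient m j n"
  by (rule bipoly_eqI) (simp add: reflection_quotient_def power_diff_sumr2)

lemma power_sum_minus_sref:
  assumes "0 < m"
  shows "(Zv ^ m + Zbv ^ m) - sref m j (Zv ^ m + Zbv ^ m)
       = cst2 (1 - (-1) ^ m) * (Zbv ^ m - sref m j (Zbv ^ m))"
proof (rule bipoly_eqI)
  fix x y :: complex
  define w where "w = zeta m ^ j"
  define s :: complex where "s = (-1) ^ m"
  have "w ^ m = 1"
    using assms by (simp add: w_def zeta_power_power_self)
  then have "((- 1) * w * y) ^ m = s * y ^ m" and "((- 1) * inverse w * x) ^ m = s * x ^ m"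
    by (simp_all only: s_def power_mult_distrib power_inverse) simp_all
  moreover have "s * s = 1"
    by (simp add: s_def flip: power_add)
  ultimately show "eval2 ((Zv ^ m + Zbv ^ m) - sref m j (Zv ^ m + Zbv ^ m)) x y
      = eval2 (cst2 (1 - (-1) ^ m) * (Zbv ^ m - sref m j (Zbv ^ m))) x y"
    by (simp add: w_def [symmetric] s_def [symmetric] algebra_simps)
qed

lemma Zbv_plus_cst2_Zv_neq_0: "Zbv + cst2 a * Zv \<noteq> 0"
proof
  assume "Zbv + cst2 a * Zv = 0"
  then have "eval2 (Zbv + cst2 a * Zv) 0 1 = 0"
    by simp
  then show False
    by simp
qed

lemma Zv_plus_cst2_Zbv_neq_0: "Zv + cst2 a * Zbv \<noteq> 0"
proof
  assume "Zv + cst2 a * Zbv = 0"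
  then have "eval2 (Zv + cst2 a * Zbv) 1 0 = 0"
    by simp
  then show False
    by simp
qed

lemma cst2_mult: "cst2 (a * b) = cst2 a * cst2 b"
  by (simp add: cst2_def)

lemma Zbv_plus_cst2_Zv_eq:
  "w \<noteq> 0 \<Longrightarrow> Zbv + cst2 (inverse w) * Zv = cst2 (inverse w) * (Zv + cst2 w * Zbv)"
  by (rule bipoly_eqI) (simp add: field_simps)

lemma DunklYb_power_sum:
  assumes "0 < m"
  shows "DunklYb m c (Zv ^ m + Zbv ^ m) = cst2 (of_nat m * (1 - c * (1 - (-1) ^ m))) * Zbv ^ (m - 1)"
proof -
  let ?q = "Zv ^ m + Zbv ^ m"
  have quotient: "(?q - sref m j ?q) div (Zbv + cst2 (inverse (zeta m ^ j)) * Zv)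
      = cst2 (1 - (-1) ^ m) * reflection_quotient m j m" for j
    unfolding power_sum_minus_sref [OF assms] Zbv_power_minus_sref
      mult.left_commute [of "cst2 (1 - (-1) ^ m)"]
    by (simp add: Zbv_plus_cst2_Zv_neq_0)
  have "(\<Sum>j<m. cst2 (1 - (-1) ^ m) * reflection_quotient m j m)
      = cst2 ((1 - (-1) ^ m) * of_nat m) * Zbv ^ (m - 1)"
  proof (rule bipoly_eqI)
    fix x y
    show "eval2 (\<Sum>j<m. cst2 (1 - (-1) ^ m) * reflection_quotient m j m) x y
        = eval2 (cst2 ((1 - (-1) ^ m) * of_nat m) * Zbv ^ (m - 1)) x y"
      using sum_reflection_quotients [of 0 m m x y] assms
      by (simp flip: sum_distrib_left)
  qed
  then show ?thesis
    unfolding DunklYb_def quotient dzb_power_sum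
    by (intro bipoly_eqI) (simp add: algebra_simps)
qed

lemma DunklY_cst2_Zbv_power:
  assumes "n < m"
  shows "DunklY m c (cst2 a * Zbv ^ n) = 0"
proof -
  let ?p = "cst2 a * Zbv ^ n"
  have quotient: "(?p - sref m j ?p) div (Zv + cst2 (zeta m ^ j) * Zbv)
      = cst2 (a * inverse (zeta m ^ j)) * reflection_quotient m j n" for j
  proof -
    have "?p - sref m j ?p = cst2 a * (Zbv ^ n - sref m j (Zbv ^ n))"
      by (rule bipoly_eqI) (simp add: algebra_simps)
    also have "\<dots> = cst2 (a * inverse (zeta m ^ j)) * reflection_quotient m j n
        * (Zv + cst2 (zeta m ^ j) * Zbv)"
      unfolding Zbv_power_minus_sref Zbv_plus_cst2_Zv_eq [OF power_not_zero [OF zeta_neq_0]]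
      by (simp add: cst2_mult mult_ac)
    finally show ?thesis
      by (simp add: Zv_plus_cst2_Zbv_neq_0)
  qed
  have "(\<Sum>j<m. cst2 (a * inverse (zeta m ^ j)) * reflection_quotient m j n) = 0"
  proof (cases "n = 0")
    case False
    show ?thesis
    proof (rule bipoly_eqI)
      fix x y
      show "eval2 (\<Sum>j<m. cst2 (a * inverse (zeta m ^ j)) * reflection_quotient m j n) x y
          = eval2 0 x y"
        using sum_reflection_quotients [of 1 n m x y] assms False
        by (simp add: mult.assoc flip: sum_distrib_left)
    qed
  qed (simp add: reflection_quotient_def)
  then show ?thesis
    by (simp add: DunklY_def quotient dz_cst2_Zbv_power)
qed

lemma ex_complex_nth_root:
  assumes "0 < n"
  shows "\<exists>z::complex. z ^ n = c"
proof (cases "c = 0")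
  case False
  show ?thesis
    using bij_betw_apply [OF bij_betw_nth_root_unity [OF False assms], of 1] by auto
qed (use assms in auto)

lemma ex_mult_eq_and_power_sum_eq:
  assumes "0 < m"
  shows "\<exists>a b::complex. a * b = u \<and> a ^ m + b ^ m = v"
proof (cases "u = 0")
  case True
  obtain a where "a ^ m = v"
    using ex_complex_nth_root [OF assms] by blast
  with True assms show ?thesis
    by (intro exI [of _ a] exI [of _ 0]) auto
next
  case False
  define t where "t = (v + csqrt (v\<^sup>2 - 4 * u ^ m)) / 2"
  have t_root: "t * (v - t) = u ^ m"
    by (simp add: t_def field_simps power2_eq_square [symmetric])
  obtain a where a: "a ^ m = t"
    using ex_complex_nth_root [OF assms] by blast
  have "t \<noteq> 0"
    using t_root False by auto
  then have "a \<noteq> 0"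
    using a assms by auto
  moreover have "(u / a) ^ m = v - t"
    using t_root a \<open>t \<noteq> 0\<close> by (simp add: power_divide field_simps)
  ultimately show ?thesis
    using a by (intro exI [of _ a] exI [of _ "u / a"]) auto
qed

lemma alg_indep2_Zv_mult_Zbv_power_sum:
  assumes "0 < m"
  shows "alg_indep2 (Zv * Zbv) (Zv ^ m + Zbv ^ m)"
  unfolding alg_indep2_def
proof (intro allI impI)
  fix P
  assume P: "subst2 P (Zv * Zbv) (Zv ^ m + Zbv ^ m) = 0"
  show "P = 0"
  proof (rule bipoly_eqI)
    fix u v :: complex
    obtain a b where "a * b = u" "a ^ m + b ^ m = v"
      using ex_mult_eq_and_power_sum_eq [OF assms] by blast
    then show "eval2 P u v = eval2 0 u v"
      using arg_cong [OF P, of "\<lambda>q. eval2 q a b"] by simp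
  qed
qed

theorem corollary2p5:
  fixes m :: nat
  assumes "m \<ge> 2"
  shows "(\<forall>c :: complex. DunklF m c (Zv ^ m + Zbv ^ m) = 0)
         \<and> alg_indep2 (Zv * Zbv) (Zv ^ m + Zbv ^ m)"
proof
  have "0 < m"
    using assms by simp
  show "\<forall>c :: complex. DunklF m c (Zv ^ m + Zbv ^ m) = 0"
    using \<open>0 < m\<close> by (simp add: DunklF_def DunklYb_power_sum DunklY_cst2_Zbv_power)
  show "alg_indep2 (Zv * Zbv) (Zv ^ m + Zbv ^ m)"
    using \<open>0 < m\<close> by (rule alg_indep2_Zv_mult_Zbv_power_sum)
qed

end
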